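(* There exists a compact, countably infinite topological space $(T,\tau)$ which is not the continuous image of Cantor's ternary set $C$; that is, there is no continuous surjection $f\colon C \to T$.
   Context: Cantor's ternary set is $C = \left\{ \sum_{n \in \mathbb{N}} \frac{\omega_n}{3^n} : \omega_n \in \{0,2\} \text{ for all } n \in \mathbb{N}\right\}$, equipped with the subspace topology induced by the Euclidean metric on $\mathbb{R}$. A subset $A$ of a topological space is called compact if every collection of open sets whose union contains $A$ has a finite subcollection whose union contains $A$; compactness does not presuppose the Hausdorff property. *)

theory Defs
  imports "HOL-Analysis.Analysis"
begin

text \<open>Cantor's ternary set: sums over n \<ge> 1 of omega_n / 3^n with omega_n in {0,2}.
  Here the index is shifted: omega is indexed from 0 and term k is omega k / 3^(k+1).\<close>
definition cantor_set :: "real set" where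
  "cantor_set = {x. \<exists>\<omega>::nat \<Rightarrow> real. (\<forall>n. \<omega> n \<in> {0, 2}) \<and> x = (\<Sum>n. \<omega> n / 3 ^ Suc n)}"

end

theory Submission
  imports Defs
begin

text \<open>Let \<open>T\<close> consist of two points \<open>0\<close>, \<open>1\<close> and countably many isolated points arranged in
  infinitely many infinite columns; a neighbourhood of \<open>1\<close> contains all but finitely many
  columns, a neighbourhood of \<open>0\<close> contains all but finitely many points of every column.
  \<open>T\<close> is compact. If \<open>f\<close> mapped a compact Hausdorff space such as \<open>C\<close> onto \<open>T\<close>, normality
  would separate the fibres of \<open>0\<close> and \<open>1\<close> by disjoint open sets, and the images of their
  complements would be two compact sets covering \<open>T\<close>, one missing \<open>0\<close> and one missing \<open>1\<close>.
  But a compact set missing \<open>1\<close> meets only finitely many columns, and a compact set missing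
  \<open>0\<close> meets every column in a finite set, so some column is not covered.\<close>

lemma compact_cantor_set: "compact cantor_set"
proof -
  define S :: "(nat \<Rightarrow> real) set" where "S = PiE UNIV (\<lambda>_. {0,2})"
  define g :: "(nat \<Rightarrow> real) \<Rightarrow> real" where "g = (\<lambda>\<omega>. \<Sum>n. \<omega> n / 3 ^ Suc n)"
  have "compactin (product_topology (\<lambda>_. euclidean) UNIV) S"
    unfolding S_def compactin_PiE by (auto intro: finite_imp_compact)
  hence "compact S" by (simp add: euclidean_product_topology)
  have "summable (\<lambda>n. (2/3) * (1/3::real) ^ n)"
    by (intro summable_mult summable_geometric) auto
  hence "summable (\<lambda>n. 2 / 3 ^ Suc n :: real)"
    by (simp add: field_simps)
  hence "uniform_limit S (\<lambda>n \<omega>. \<Sum>i<n. \<omega> i / 3 ^ Suc i) g sequentially"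
    unfolding g_def
  proof (rule Weierstrass_m_test[rotated])
    fix n \<omega> assume "\<omega> \<in> S"
    hence "\<omega> n \<in> {0, 2}"
      unfolding S_def by auto
    thus "norm (\<omega> n / 3 ^ Suc n) \<le> 2 / 3 ^ Suc n"
      by auto
  qed
  hence "continuous_on S g"
  proof (rule uniform_limit_theorem[rotated])
    show "\<forall>\<^sub>F n in sequentially. continuous_on S (\<lambda>\<omega>. \<Sum>i<n. \<omega> i / 3 ^ Suc i)"
      by (intro always_eventually allI continuous_intros
          continuous_on_product_then_coordinatewise continuous_on_id) auto
  qed simp
  moreover have "cantor_set = g ` S"
    unfolding cantor_set_def g_def S_def image_def by (simp add: PiE_UNIV_domain Pi_iff Bex_def)
  ultimately show ?thesis
    using compact_continuous_image \<open>compact S\<close> by metis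
qed

lemma continuous_image_of_compact_Hausdorff_compact_cover:
  assumes "compact_space X" "Hausdorff_space X"
    and "continuous_map X Y f" "f ` topspace X = topspace Y"
    and "closedin Y {a}" "closedin Y {b}" "a \<noteq> b"
  obtains Ka Kb where "compactin Y Ka" "compactin Y Kb" "a \<notin> Ka" "b \<notin> Kb"
    "Ka \<union> Kb = topspace Y"
proof -
  let ?fibre = "\<lambda>y. {x \<in> topspace X. f x \<in> {y}}"
  have "normal_space X"
    using assms(1,2) compact_Hausdorff_or_regular_imp_normal_space by blast
  moreover have "closedin X (?fibre a)" "closedin X (?fibre b)"
    using assms(3,5,6) closedin_continuous_map_preimage by blast+
  moreover have "disjnt (?fibre a) (?fibre b)"
    using \<open>a \<noteq> b\<close> by (auto simp: disjnt_def)
  ultimately obtain U V where UV: "openin X U" "openin X V" "?fibre a \<subseteq> U" "?fibre b \<subseteq> V"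
    "disjnt U V"
    unfolding normal_space_def by meson
  have compact_image: "compactin Y (f ` (topspace X - W))" if "openin X W" for W
    using that assms(1,3) by (intro image_compactin closedin_compact_space) auto
  show ?thesis
  proof
    show "compactin Y (f ` (topspace X - U))" "compactin Y (f ` (topspace X - V))"
      using UV compact_image by auto
    show "a \<notin> f ` (topspace X - U)" "b \<notin> f ` (topspace X - V)"
      using UV by auto
    have "topspace X = (topspace X - U) \<union> (topspace X - V)"
      using UV(5) by (auto simp: disjnt_def)
    thus "f ` (topspace X - U) \<union> f ` (topspace X - V) = topspace Y"
      using assms(4) by (metis image_Un)
  qed
qed

lemma finite_compactin_minus_open:
  assumes "compactin X K" "openin X A" "\<And>q. q \<in> K - A \<Longrightarrow> openin X {q}"
  shows "finite (K - A)"
proof -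
  let ?\<U> = "insert A ((\<lambda>q. {q}) ` (K - A))"
  have "\<forall>U\<in>?\<U>. openin X U" "K \<subseteq> \<Union>?\<U>"
    using assms(2,3) by auto
  then obtain \<F> where \<F>: "finite \<F>" "\<F> \<subseteq> ?\<U>" "K \<subseteq> \<Union>\<F>"
    using assms(1) unfolding compactin_def by meson
  have "K - A \<subseteq> \<Union>(\<F> - {A})"
    using \<F>(3) by blast
  moreover have "finite (\<Union>(\<F> - {A}))"
    using \<F>(1,2) by auto
  ultimately show ?thesis
    by (rule finite_subset)
qed

text \<open>\<open>0\<close> and \<open>1\<close> are the two limit points; \<open>p \<ge> 2\<close> encodes the grid point
  \<open>prod_decode (p - 2)\<close> = (column, row).\<close>
definition column :: "nat \<Rightarrow> nat" where
  "column p = fst (prod_decode (p - 2))"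

definition column_open :: "nat set \<Rightarrow> bool" where
  "column_open U \<longleftrightarrow>
     (1 \<in> U \<longrightarrow> (\<exists>k. \<forall>p. 2 \<le> p \<and> k \<le> column p \<longrightarrow> p \<in> U)) \<and>
     (0 \<in> U \<longrightarrow> (\<forall>n. finite {p. 2 \<le> p \<and> column p = n \<and> p \<notin> U}))"

definition column_space :: "nat topology" where
  "column_space = topology column_open"

lemma istopology_column_open: "istopology column_open"
  unfolding istopology_def
proof (intro conjI allI impI ballI)
  fix S T assume S: "column_open S" and T: "column_open T"
  show "column_open (S \<inter> T)"
    unfolding column_open_def
  proof (intro conjI impI allI)
    assume "1 \<in> S \<inter> T"
    then obtain k1 k2 where "\<forall>p. 2 \<le> p \<and> k1 \<le> column p \<longrightarrow> p \<in> S"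
      "\<forall>p. 2 \<le> p \<and> k2 \<le> column p \<longrightarrow> p \<in> T"
      using S T unfolding column_open_def by blast
    thus "\<exists>k. \<forall>p. 2 \<le> p \<and> k \<le> column p \<longrightarrow> p \<in> S \<inter> T"
      by (intro exI[of _ "max k1 k2"]) auto
  next
    fix n assume "0 \<in> S \<inter> T"
    hence "finite ({p. 2 \<le> p \<and> column p = n \<and> p \<notin> S} \<union> {p. 2 \<le> p \<and> column p = n \<and> p \<notin> T})"
      using S T unfolding column_open_def by auto
    thus "finite {p. 2 \<le> p \<and> column p = n \<and> p \<notin> S \<inter> T}"
      by (rule finite_subset[rotated]) auto
  qed
next
  fix \<K> assume \<K>: "\<forall>A\<in>\<K>. column_open A"
  show "column_open (\<Union>\<K>)"
    unfolding column_open_def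
  proof (intro conjI impI allI)
    assume "1 \<in> \<Union>\<K>"
    then obtain A where "A \<in> \<K>" "1 \<in> A" by blast
    then obtain k where "\<forall>p. 2 \<le> p \<and> k \<le> column p \<longrightarrow> p \<in> A"
      using \<K> unfolding column_open_def by blast
    thus "\<exists>k. \<forall>p. 2 \<le> p \<and> k \<le> column p \<longrightarrow> p \<in> \<Union>\<K>"
      using \<open>A \<in> \<K>\<close> by blast
  next
    fix n assume "0 \<in> \<Union>\<K>"
    then obtain A where "A \<in> \<K>" "0 \<in> A" by blast
    hence "finite {p. 2 \<le> p \<and> column p = n \<and> p \<notin> A}"
      using \<K> unfolding column_open_def by blast
    thus "finite {p. 2 \<le> p \<and> column p = n \<and> p \<notin> \<Union>\<K>}"
      by (rule finite_subset[rotated]) (use \<open>A \<in> \<K>\<close> in auto)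
  qed
qed

lemma openin_column_space: "openin column_space U \<longleftrightarrow> column_open U"
  unfolding column_space_def using istopology_column_open by simp

lemma topspace_column_space: "topspace column_space = UNIV"
proof -
  have "column_open UNIV"
    unfolding column_open_def by auto
  thus ?thesis
    unfolding topspace_def openin_column_space by auto
qed

lemma openin_column_space_grid_point: "2 \<le> p \<Longrightarrow> openin column_space {p}"
  unfolding openin_column_space column_open_def by auto

lemma closedin_column_space_0: "closedin column_space {0}"
  and closedin_column_space_1: "closedin column_space {1}"
  unfolding closedin_def topspace_column_space openin_column_space column_open_def by auto

lemma column_grid_point: "column (prod_encode (k, m) + 2) = k"
  unfolding column_def by simp

lemma infinite_column: "infinite {p. 2 \<le> p \<and> column p = k}"
proof -
  have "inj (\<lambda>m. prod_encode (k, m) + 2)"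
    by (rule injI) simp
  hence "infinite (range (\<lambda>m. prod_encode (k, m) + 2))"
    by (rule range_inj_infinite)
  moreover have "range (\<lambda>m. prod_encode (k, m) + 2) \<subseteq> {p. 2 \<le> p \<and> column p = k}"
    using column_grid_point by auto
  ultimately show ?thesis
    using finite_subset by blast
qed

lemma compact_space_column_space: "compact_space column_space"
  unfolding compact_space_alt topspace_column_space
proof (intro allI impI)
  fix \<U> assume \<U>: "(\<forall>U\<in>\<U>. openin column_space U) \<and> UNIV \<subseteq> \<Union>\<U>"
  then obtain U0 U1 where U0: "U0 \<in> \<U>" "0 \<in> U0" and U1: "U1 \<in> \<U>" "1 \<in> U1"
    by blast
  hence "column_open U0" "column_open U1"
    using \<U> by (simp_all add: openin_column_space)
  hence fin: "\<forall>n. finite {p. 2 \<le> p \<and> column p = n \<and> p \<notin> U0}"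
    and "\<exists>k. \<forall>p. 2 \<le> p \<and> k \<le> column p \<longrightarrow> p \<in> U1"
    using U0(2) U1(2) by (simp_all add: column_open_def)
  then obtain k where k: "\<forall>p. 2 \<le> p \<and> k \<le> column p \<longrightarrow> p \<in> U1"
    by blast
  define R where "R = {p. 2 \<le> p \<and> column p < k \<and> p \<notin> U0}"
  have "R = (\<Union>n<k. {p. 2 \<le> p \<and> column p = n \<and> p \<notin> U0})"
    unfolding R_def by auto
  hence "finite R"
    using fin by simp
  have "\<forall>r\<in>R. \<exists>U\<in>\<U>. r \<in> U"
    using \<U> by blast
  then obtain V where V: "\<And>r. r \<in> R \<Longrightarrow> V r \<in> \<U> \<and> r \<in> V r"
    by metis
  have R_covers: "p \<in> R" if "p \<notin> U0" "p \<notin> U1" for p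
  proof -
    have "2 \<le> p"
      using that U0(2) U1(2) less_2_cases by (metis One_nat_def not_le)
    moreover have "column p < k"
      using k that(2) \<open>2 \<le> p\<close> by (meson not_le)
    ultimately show ?thesis
      using that(1) unfolding R_def by blast
  qed
  have "UNIV \<subseteq> \<Union>({U0, U1} \<union> V ` R)"
  proof
    fix p
    show "p \<in> \<Union>({U0, U1} \<union> V ` R)"
    proof (cases "p \<in> U0 \<or> p \<in> U1")
      case False
      hence "p \<in> R"
        using R_covers by blast
      thus ?thesis
        using V[OF \<open>p \<in> R\<close>] by blast
    qed auto
  qed
  moreover have "finite ({U0, U1} \<union> V ` R)" "{U0, U1} \<union> V ` R \<subseteq> \<U>"
    using \<open>finite R\<close> U0(1) U1(1) V by auto
  ultimately show "\<exists>\<F>. finite \<F> \<and> \<F> \<subseteq> \<U> \<and> UNIV \<subseteq> \<Union>\<F>"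
    by blast
qed

lemma compactin_column_space_finite_column:
  assumes "compactin column_space K" "0 \<notin> K"
  shows "finite (K \<inter> {p. 2 \<le> p \<and> column p = n})"
proof -
  define A where "A = {1} \<union> {p. 2 \<le> p \<and> column p \<noteq> n}"
  have "openin column_space A"
    unfolding A_def openin_column_space column_open_def by (auto intro!: exI[of _ "Suc n"])
  moreover have "p = 1 \<or> 2 \<le> p" if "p \<in> K" for p
    using assms(2) that by (metis One_nat_def less_2_cases not_le)
  hence K_minus_A: "K - A = K \<inter> {p. 2 \<le> p \<and> column p = n}"
    unfolding A_def by auto
  ultimately have "finite (K - A)"
    by (intro finite_compactin_minus_open[OF assms(1)] openin_column_space_grid_point)
       (auto simp: K_minus_A)
  thus ?thesis
    by (simp add: K_minus_A)
qed

lemma compactin_column_space_bounded_columns: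
  assumes "compactin column_space K" "1 \<notin> K"
  obtains k where "\<And>p. p \<in> K \<Longrightarrow> 2 \<le> p \<Longrightarrow> column p < k"
proof -
  let ?G = "K \<inter> {p. 2 \<le> p}"
  define \<sigma> where "\<sigma> = inv_into ?G column"
  have \<sigma>: "\<sigma> c \<in> ?G" "column (\<sigma> c) = c" if "c \<in> column ` ?G" for c
    using that unfolding \<sigma>_def by (rule inv_into_into, rule f_inv_into_f)
  define A where "A = - ({1} \<union> \<sigma> ` column ` ?G)"
  have "{p. 2 \<le> p \<and> column p = n \<and> p \<notin> A} \<subseteq> {\<sigma> n}" for n
    unfolding A_def using \<sigma>(2) by auto
  hence "finite {p. 2 \<le> p \<and> column p = n \<and> p \<notin> A}" for n
    by (rule finite_subset) simp
  moreover have "1 \<notin> A"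
    unfolding A_def by simp
  ultimately have "openin column_space A"
    unfolding openin_column_space column_open_def by blast
  moreover have K_minus_A: "K - A = \<sigma> ` column ` ?G"
    using \<sigma>(1) assms(2) unfolding A_def by auto
  ultimately have "finite (K - A)"
    by (intro finite_compactin_minus_open[OF assms(1)] openin_column_space_grid_point)
       (use \<sigma>(1) in \<open>auto simp: K_minus_A\<close>)
  moreover have "column ` ?G \<subseteq> column ` \<sigma> ` column ` ?G"
    using \<sigma>(2) by (metis image_eqI subsetI)
  ultimately have "finite (column ` ?G)"
    unfolding K_minus_A by (rule finite_surj)
  then obtain k where "column ` ?G \<subseteq> {..<k}"
    using finite_nat_bounded by blast
  thus ?thesis
    using that by blast
qed

lemma column_space_no_compact_cover:
  assumes "compactin column_space Ka" "compactin column_space Kb" "0 \<notin> Ka" "1 \<notin> Kb"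
  shows "Ka \<union> Kb \<noteq> UNIV"
proof
  assume cover: "Ka \<union> Kb = UNIV"
  obtain k where k: "\<And>p. p \<in> Kb \<Longrightarrow> 2 \<le> p \<Longrightarrow> column p < k"
    using compactin_column_space_bounded_columns assms(2,4) by blast
  have "{p. 2 \<le> p \<and> column p = k} \<subseteq> Ka \<inter> {p. 2 \<le> p \<and> column p = k}"
    using cover k by fastforce
  thus False
    using compactin_column_space_finite_column[OF assms(1,3)] infinite_column finite_subset by blast
qed

lemma column_space_not_continuous_image_of_compact_Hausdorff:
  assumes "compact_space X" "Hausdorff_space X" "continuous_map X column_space f"
  shows "f ` topspace X \<noteq> topspace column_space"
proof
  assume onto: "f ` topspace X = topspace column_space"
  obtain Ka Kb where "compactin column_space Ka" "compactin column_space Kb"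
    "0 \<notin> Ka" "1 \<notin> Kb" "Ka \<union> Kb = topspace column_space"
    by (rule continuous_image_of_compact_Hausdorff_compact_cover[OF assms onto
          closedin_column_space_0 closedin_column_space_1 zero_neq_one])
  thus False
    using column_space_no_compact_cover topspace_column_space by metis
qed

theorem theorem1:
  shows "\<exists>X :: nat topology.
           compact_space X \<and> countable (topspace X) \<and> infinite (topspace X) \<and>
           \<not> (\<exists>f. continuous_map (top_of_set cantor_set) X f \<and> f ` cantor_set = topspace X)"
proof -
  have "compact_space (top_of_set cantor_set)" "Hausdorff_space (top_of_set cantor_set)"
    using compact_cantor_set
    by (auto intro: compact_space_subtopology Hausdorff_space_subtopology)
  hence "\<not> (\<exists>f. continuous_map (top_of_set cantor_set) column_space f \<and>
               f ` cantor_set = topspace column_space)"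
    using column_space_not_continuous_image_of_compact_Hausdorff by fastforce
  thus ?thesis
    using compact_space_column_space topspace_column_space by (intro exI[of _ column_space]) auto
qed

end
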